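(* The theory $\mathbb{R}\mathsf{FR}^\ast$ is unstable.
   Context: An $\mathbb{R}$-forest is a complete extended ($[0,\infty]$-valued) metric space in which each set $\{y:d(x,y)<\infty\}$ is an $\mathbb{R}$-tree. For a subset $X_0$ of an $\mathbb{R}$-forest, $\langle X_0\rangle$ is the smallest sub-$\mathbb{R}$-forest containing it; finitely generated means $=\langle X_0\rangle$ for finite $X_0$. $\mathbb{R}\mathsf{FR}$ is the theory in the language with an extended metric and a $[0,1]$-valued binary predicate $R$ saying the underlying space is an $\mathbb{R}$-forest and $R$ is $1$-$1$-Lipschitz ($R(a,\cdot)$ and $R(\cdot,a)$ are $1$-Lipschitz for all $a$). A model $A$ is t.e.c. if every finitely generated model $C\supseteq B$ of $\mathbb{R}\mathsf{FR}$, with $B\subseteq A$ finitely generated, embeds into $A$ over $B$. $\mathbb{R}\mathsf{FR}^\ast$ is the common theory of all t.e.c. models of $\mathbb{R}\mathsf{FR}$. *)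

theory Defs
  imports "HOL-Analysis.Analysis"
begin

record 'a rstruct =
  carr  :: "'a set"
  edist :: "'a \<Rightarrow> 'a \<Rightarrow> ennreal"
  rel   :: "'a \<Rightarrow> 'a \<Rightarrow> real"

definition ext_metric :: "'a set \<Rightarrow> ('a \<Rightarrow> 'a \<Rightarrow> ennreal) \<Rightarrow> bool" where
  "ext_metric S d \<longleftrightarrow>
     (\<forall>x\<in>S. \<forall>y\<in>S. (d x y = 0 \<longleftrightarrow> x = y) \<and> d x y = d y x) \<and>
     (\<forall>x\<in>S. \<forall>y\<in>S. \<forall>z\<in>S. d x z \<le> d x y + d y z)"

definition ext_complete :: "'a set \<Rightarrow> ('a \<Rightarrow> 'a \<Rightarrow> ennreal) \<Rightarrow> bool" where
  "ext_complete S d \<longleftrightarrow>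
     (\<forall>u::nat \<Rightarrow> 'a. (\<forall>n. u n \<in> S) \<and>
          (\<forall>e>(0::real). \<exists>N. \<forall>m\<ge>N. \<forall>n\<ge>N. d (u m) (u n) < ennreal e) \<longrightarrow>
          (\<exists>x\<in>S. \<forall>e>(0::real). \<exists>N. \<forall>n\<ge>N. d (u n) x < ennreal e))"

definition path_cont :: "'a set \<Rightarrow> ('a \<Rightarrow> 'a \<Rightarrow> ennreal) \<Rightarrow> (real \<Rightarrow> 'a) \<Rightarrow> bool" where
  "path_cont S d p \<longleftrightarrow>
     (\<forall>t\<in>{0..1}. p t \<in> S) \<and>
     (\<forall>t\<in>{0..1::real}. \<forall>e>(0::real). \<exists>\<delta>>0. \<forall>s\<in>{0..1}. \<bar>s - t\<bar> < \<delta> \<longrightarrow> d (p s) (p t) < ennreal e)"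

definition geodesic :: "('a \<Rightarrow> 'a \<Rightarrow> ennreal) \<Rightarrow> 'a \<Rightarrow> 'a \<Rightarrow> (real \<Rightarrow> 'a) \<Rightarrow> bool" where
  "geodesic d x y g \<longleftrightarrow>
     g 0 = x \<and> g (enn2real (d x y)) = y \<and>
     (\<forall>s\<in>{0..enn2real (d x y)}. \<forall>t\<in>{0..enn2real (d x y)}. d (g s) (g t) = ennreal \<bar>s - t\<bar>)"

text \<open>R-tree: a (finite-valued) metric space in which any two points are joined by a
  geodesic segment, and every arc between them has the image of that segment (so the
  arc is unique and it is a geodesic segment).\<close>
definition real_tree :: "'a set \<Rightarrow> ('a \<Rightarrow> 'a \<Rightarrow> ennreal) \<Rightarrow> bool" where
  "real_tree S d \<longleftrightarrow>
     S \<noteq> {} \<and> ext_metric S d \<and> (\<forall>x\<in>S. \<forall>y\<in>S. d x y < \<infinity>) \<and>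
     (\<forall>x\<in>S. \<forall>y\<in>S. \<exists>g. geodesic d x y g \<and> g ` {0..enn2real (d x y)} \<subseteq> S) \<and>
     (\<forall>x\<in>S. \<forall>y\<in>S. \<forall>g p.
        geodesic d x y g \<and> g ` {0..enn2real (d x y)} \<subseteq> S \<and>
        path_cont S d p \<and> inj_on p {0..1} \<and> p 0 = x \<and> p 1 = y \<longrightarrow>
        p ` {0..1} = g ` {0..enn2real (d x y)})"

definition real_forest :: "'a set \<Rightarrow> ('a \<Rightarrow> 'a \<Rightarrow> ennreal) \<Rightarrow> bool" where
  "real_forest S d \<longleftrightarrow>
     ext_metric S d \<and> ext_complete S d \<and> (\<forall>x\<in>S. real_tree {y\<in>S. d x y < \<infinity>} d)"

definition gen_forest :: "'a set \<Rightarrow> ('a \<Rightarrow> 'a \<Rightarrow> ennreal) \<Rightarrow> 'a set \<Rightarrow> 'a set" where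
  "gen_forest S d X = \<Inter>{T. T \<subseteq> S \<and> X \<subseteq> T \<and> real_forest T d}"

definition fin_gen :: "'a set \<Rightarrow> ('a \<Rightarrow> 'a \<Rightarrow> ennreal) \<Rightarrow> bool" where
  "fin_gen S d \<longleftrightarrow> (\<exists>X. finite X \<and> X \<subseteq> S \<and> S = gen_forest S d X)"

definition rfr_model :: "('a, 'b) rstruct_scheme \<Rightarrow> bool" where
  "rfr_model M \<longleftrightarrow>
     real_forest (carr M) (edist M) \<and>
     (\<forall>x\<in>carr M. \<forall>y\<in>carr M. 0 \<le> rel M x y \<and> rel M x y \<le> 1) \<and>
     (\<forall>a\<in>carr M. \<forall>x\<in>carr M. \<forall>y\<in>carr M.
        ennreal \<bar>rel M a x - rel M a y\<bar> \<le> edist M x y \<and>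
        ennreal \<bar>rel M x a - rel M y a\<bar> \<le> edist M x y)"

definition lstruct :: "'a rstruct \<Rightarrow> bool" where
  "lstruct M \<longleftrightarrow>
     ext_metric (carr M) (edist M) \<and> ext_complete (carr M) (edist M) \<and>
     (\<forall>x\<in>carr M. \<forall>y\<in>carr M. 0 \<le> rel M x y \<and> rel M x y \<le> 1) \<and>
     (\<forall>a\<in>carr M. \<forall>x\<in>carr M. \<forall>y\<in>carr M.
        ennreal \<bar>rel M a x - rel M a y\<bar> \<le> edist M x y \<and>
        ennreal \<bar>rel M x a - rel M y a\<bar> \<le> edist M x y)"

definition restr :: "'a rstruct \<Rightarrow> 'a set \<Rightarrow> 'a rstruct" where
  "restr M S = M\<lparr>carr := S\<rparr>"

definition embedding :: "('a \<Rightarrow> 'b) \<Rightarrow> 'a rstruct \<Rightarrow> 'b rstruct \<Rightarrow> bool" where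
  "embedding f M N \<longleftrightarrow>
     f ` carr M \<subseteq> carr N \<and>
     (\<forall>x\<in>carr M. \<forall>y\<in>carr M. edist N (f x) (f y) = edist M x y \<and> rel N (f x) (f y) = rel M x y)"

text \<open>A finitely generated extension C \<supseteq> B is represented by an
  embedding g : B \<rightarrow> C; finitely generated R-forests have at most continuum many
  points, so C may be taken with carrier in the type real without loss.\<close>
definition tec :: "'a rstruct \<Rightarrow> bool" where
  "tec A \<longleftrightarrow> rfr_model A \<and>
     (\<forall>S. S \<subseteq> carr A \<and> rfr_model (restr A S) \<and> fin_gen S (edist A) \<longrightarrow>
        (\<forall>(C::real rstruct) g.
           rfr_model C \<and> fin_gen (carr C) (edist C) \<and> embedding g (restr A S) C \<longrightarrow>
           (\<exists>f. embedding f C A \<and> (\<forall>x\<in>S. f (g x) = x))))"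

text \<open>The atomic distance formula is interpreted through the homeomorphism
  [0,\<infinity>] \<rightarrow> [0,1], t \<mapsto> t/(1+t), \<infinity> \<mapsto> 1. Connectives are arbitrary continuous
  unary / binary functions on [0,1].\<close>
datatype fm =
    Dist nat nat
  | Rel nat nat
  | Conn1 "real \<Rightarrow> real" fm
  | Conn2 "real \<Rightarrow> real \<Rightarrow> real" fm fm
  | Sup nat fm
  | Inf nat fm

fun wf_fm :: "fm \<Rightarrow> bool" where
  "wf_fm (Dist i j) = True"
| "wf_fm (Rel i j) = True"
| "wf_fm (Conn1 f \<phi>) = (continuous_on {0..1} f \<and> f ` {0..1} \<subseteq> {0..1} \<and> wf_fm \<phi>)"
| "wf_fm (Conn2 f \<phi> \<psi>) = (continuous_on ({0..1} \<times> {0..1}) (\<lambda>(u, v). f u v) \<and>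
      (\<lambda>(u, v). f u v) ` ({0..1} \<times> {0..1}) \<subseteq> {0..1} \<and> wf_fm \<phi> \<and> wf_fm \<psi>)"
| "wf_fm (Sup x \<phi>) = wf_fm \<phi>"
| "wf_fm (Inf x \<phi>) = wf_fm \<phi>"

fun fv :: "fm \<Rightarrow> nat set" where
  "fv (Dist i j) = {i, j}"
| "fv (Rel i j) = {i, j}"
| "fv (Conn1 f \<phi>) = fv \<phi>"
| "fv (Conn2 f \<phi> \<psi>) = fv \<phi> \<union> fv \<psi>"
| "fv (Sup x \<phi>) = fv \<phi> - {x}"
| "fv (Inf x \<phi>) = fv \<phi> - {x}"

definition dtrunc :: "ennreal \<Rightarrow> real" where
  "dtrunc v = (if v = \<infinity> then 1 else enn2real v / (1 + enn2real v))"

fun eval :: "'a rstruct \<Rightarrow> (nat \<Rightarrow> 'a) \<Rightarrow> fm \<Rightarrow> real" where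
  "eval M \<sigma> (Dist i j) = dtrunc (edist M (\<sigma> i) (\<sigma> j))"
| "eval M \<sigma> (Rel i j) = rel M (\<sigma> i) (\<sigma> j)"
| "eval M \<sigma> (Conn1 f \<phi>) = f (eval M \<sigma> \<phi>)"
| "eval M \<sigma> (Conn2 f \<phi> \<psi>) = f (eval M \<sigma> \<phi>) (eval M \<sigma> \<psi>)"
| "eval M \<sigma> (Sup x \<phi>) = (SUP a\<in>carr M. eval M (\<sigma>(x := a)) \<phi>)"
| "eval M \<sigma> (Inf x \<phi>) = (INF a\<in>carr M. eval M (\<sigma>(x := a)) \<phi>)"

definition sentence :: "fm \<Rightarrow> bool" where
  "sentence \<phi> \<longleftrightarrow> wf_fm \<phi> \<and> fv \<phi> = {}"

definition sat :: "'a rstruct \<Rightarrow> fm \<Rightarrow> bool" where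
  "sat M \<phi> \<longleftrightarrow> (\<forall>\<sigma>. (\<forall>v. \<sigma> v \<in> carr M) \<longrightarrow> eval M \<sigma> \<phi> = 0)"

definition rfr_star :: "'a itself \<Rightarrow> fm set" where
  "rfr_star (_ :: 'a itself) = {\<phi>. sentence \<phi> \<and> (\<forall>A :: 'a rstruct. tec A \<longrightarrow> sat A \<phi>)}"

definition model_of :: "fm set \<Rightarrow> 'a rstruct \<Rightarrow> bool" where
  "model_of T M \<longleftrightarrow> lstruct M \<and> (\<forall>\<phi>\<in>T. sat M \<phi>)"

definition unstable :: "'a itself \<Rightarrow> fm set \<Rightarrow> bool" where
  "unstable (_ :: 'a itself) T \<longleftrightarrow>
     (\<exists>\<phi> (k::nat) (r::real) s. wf_fm \<phi> \<and> r < s \<and>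
       (\<forall>n::nat. \<exists>M :: 'a rstruct. model_of T M \<and>
          (\<exists>a b. (\<forall>i v. a i v \<in> carr M) \<and> (\<forall>j v. b j v \<in> carr M) \<and>
             (\<forall>i<n. \<forall>j<n.
                (i < j \<longrightarrow> eval M (\<lambda>v. if v < k then a i v else b j v) \<phi> \<le> r) \<and>
                (j \<le> i \<longrightarrow> s \<le> eval M (\<lambda>v. if v < k then a i v else b j v) \<phi>)))))"

end

theory Submission
  imports Defs
begin

text \<open>Every t.e.c. model A is a model of RFR* and embeds every finitely generated model of
  RFR. Among these are finite sets in which all distances are infinite (each point is its own
  one-point R-tree), and on such a set the Lipschitz condition on R is vacuous, so R can be
  any [0,1]-valued relation. Taking R to be a half graph a_i R b_j \<longleftrightarrow> j \<le> i yields the order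
  property for the atomic formula R(x,y) inside A.\<close>

definition discrete_edist :: "'a \<Rightarrow> 'a \<Rightarrow> ennreal" where
  "discrete_edist x y = (if x = y then 0 else \<infinity>)"

lemma ext_metric_discrete_edist: "ext_metric S discrete_edist"
  unfolding ext_metric_def discrete_edist_def by auto

lemma ext_complete_discrete_edist: "ext_complete S discrete_edist"
  unfolding ext_complete_def
proof (intro allI impI)
  fix u :: "nat \<Rightarrow> 'a"
  assume u: "(\<forall>n. u n \<in> S) \<and>
    (\<forall>e>(0::real). \<exists>N. \<forall>m\<ge>N. \<forall>n\<ge>N. discrete_edist (u m) (u n) < ennreal e)"
  then obtain N where N: "\<forall>m\<ge>N. \<forall>n\<ge>N. discrete_edist (u m) (u n) < ennreal 1"
    using zero_less_one by blast
  have eventually_const: "u n = u N" if "n \<ge> N" for n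
  proof -
    have "discrete_edist (u n) (u N) < ennreal 1"
      using N that by blast
    then show ?thesis
      by (simp add: discrete_edist_def split: if_splits)
  qed
  show "\<exists>x\<in>S. \<forall>e>(0::real). \<exists>N. \<forall>n\<ge>N. discrete_edist (u n) x < ennreal e"
  proof (intro bexI[of _ "u N"] allI impI exI[of _ N])
    fix e :: real and n assume "0 < e" "N \<le> n"
    then show "discrete_edist (u n) (u N) < ennreal e"
      using eventually_const[of n] by (simp add: discrete_edist_def)
  qed (use u in simp)
qed

lemma real_tree_singleton: "real_tree {x} discrete_edist"
  unfolding real_tree_def
proof (intro conjI ballI allI impI)
  show "ext_metric {x} discrete_edist"
    by (rule ext_metric_discrete_edist)
next
  fix y z assume "y \<in> {x}" "z \<in> {x}"
  then show "\<exists>g. geodesic discrete_edist y z g \<and> g ` {0..enn2real (discrete_edist y z)} \<subseteq> {x}"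
    by (auto simp: geodesic_def discrete_edist_def intro!: exI[of _ "\<lambda>_. x"])
next
  fix y z g and p :: "real \<Rightarrow> 'a"
  assume "y \<in> {x}" "z \<in> {x}"
    and "geodesic discrete_edist y z g \<and> g ` {0..enn2real (discrete_edist y z)} \<subseteq> {x} \<and>
      path_cont {x} discrete_edist p \<and> inj_on p {0..1} \<and> p 0 = y \<and> p 1 = z"
  then have "p 0 = p 1" and "inj_on p {0..1}"
    by auto
  then have False
    by (auto dest: inj_onD)
  then show "p ` {0..1} = g ` {0..enn2real (discrete_edist y z)}" ..
qed (auto simp: discrete_edist_def)

lemma real_forest_discrete_edist: "real_forest S discrete_edist"
proof -
  have "{y\<in>S. discrete_edist x y < \<infinity>} = {x}" if "x \<in> S" for x
    using that by (auto simp: discrete_edist_def)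
  then show ?thesis
    unfolding real_forest_def
    using ext_metric_discrete_edist ext_complete_discrete_edist real_tree_singleton by auto
qed

lemma rfr_model_discrete:
  assumes "\<And>x y. 0 \<le> R x y \<and> R x y \<le> 1"
  shows "rfr_model \<lparr>carr = S, edist = discrete_edist, rel = R\<rparr>"
  unfolding rfr_model_def
  using real_forest_discrete_edist assms by (auto simp: discrete_edist_def)

lemma fin_gen_discrete:
  assumes "finite S"
  shows "fin_gen S discrete_edist"
proof -
  have "gen_forest S discrete_edist S = S"
    unfolding gen_forest_def using real_forest_discrete_edist by auto
  then show ?thesis
    unfolding fin_gen_def using assms by auto
qed

lemma real_forest_empty: "real_forest {} d"
  unfolding real_forest_def ext_metric_def ext_complete_def by auto

lemma tec_embeds_fin_gen_model:
  fixes C :: "real rstruct"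
  assumes "tec A" and "rfr_model C" and "fin_gen (carr C) (edist C)"
  shows "\<exists>f. embedding f C A"
proof -
  have "rfr_model (restr A {})"
    unfolding rfr_model_def restr_def using real_forest_empty by auto
  moreover have "fin_gen {} (edist A)"
    unfolding fin_gen_def gen_forest_def using real_forest_empty by auto
  moreover have "embedding (\<lambda>_. undefined) (restr A {}) C"
    unfolding embedding_def restr_def by auto
  ultimately show ?thesis
    using assms(1)[unfolded tec_def, THEN conjunct2, rule_format, of "{}" C "\<lambda>_. undefined"]
      assms(2,3) by blast
qed

lemma tec_model_of_rfr_star:
  fixes A :: "'a rstruct"
  assumes "tec A"
  shows "model_of (rfr_star TYPE('a)) A"
proof -
  have "lstruct A"
    using assms unfolding tec_def rfr_model_def real_forest_def lstruct_def by simp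
  then show ?thesis
    unfolding model_of_def rfr_star_def using assms by simp
qed

definition rel_half_graph :: "'a rstruct \<Rightarrow> nat \<Rightarrow> bool" where
  "rel_half_graph M n \<longleftrightarrow> (\<exists>a b. range a \<subseteq> carr M \<and> range b \<subseteq> carr M \<and>
    (\<forall>i<n. \<forall>j<n. rel M (a i) (b j) = (if j \<le> i then 1 else 0)))"

lemma unstable_if_rel_half_graphs:
  assumes "\<And>n. \<exists>M :: 'a rstruct. model_of T M \<and> rel_half_graph M n"
  shows "unstable TYPE('a) T"
proof -
  have order: "\<exists>M :: 'a rstruct. model_of T M \<and> (\<exists>a b. (\<forall>i (v::nat). a i v \<in> carr M) \<and>
    (\<forall>j (v::nat). b j v \<in> carr M) \<and> (\<forall>i<n. \<forall>j<n.
      (i < j \<longrightarrow> eval M (\<lambda>v. if v < 1 then a i v else b j v) (Rel 0 1) \<le> 0) \<and>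
      (j \<le> i \<longrightarrow> 1 \<le> eval M (\<lambda>v. if v < 1 then a i v else b j v) (Rel 0 1))))" for n :: nat
  proof -
    obtain M :: "'a rstruct" and a b where M: "model_of T M"
      and carrier: "range a \<subseteq> carr M" "range b \<subseteq> carr M"
      and half_graph: "\<forall>i<n. \<forall>j<n. rel M (a i) (b j) = (if j \<le> i then 1 else 0)"
      using assms[of n] unfolding rel_half_graph_def by blast
    show ?thesis
      using M carrier half_graph
      by (intro exI[of _ M] conjI exI[of _ "\<lambda>i (_::nat). a i"] exI[of _ "\<lambda>j (_::nat). b j"]) auto
  qed
  show ?thesis
    unfolding unstable_def
  proof (rule exI[of _ "Rel 0 1"], rule exI[of _ "1::nat"], rule exI[of _ "0::real"],
      rule exI[of _ "1::real"], intro conjI allI)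
    show "wf_fm (Rel 0 1)" "(0::real) < 1"
      by simp_all
  qed (rule order)
qed

text \<open>The left vertex i of the half graph is the real i, the right vertex j is -j-1.\<close>

definition half_graph_rel :: "real \<Rightarrow> real \<Rightarrow> real" where
  "half_graph_rel x y = (if 0 \<le> x \<and> y < 0 \<and> - y - 1 \<le> x then 1 else 0)"

definition half_graph :: "nat \<Rightarrow> real rstruct" where
  "half_graph n = \<lparr>carr = real ` {..n} \<union> (\<lambda>j. - real j - 1) ` {..n},
    edist = discrete_edist, rel = half_graph_rel\<rparr>"

lemma rfr_model_half_graph: "rfr_model (half_graph n)"
  unfolding half_graph_def by (rule rfr_model_discrete) (simp add: half_graph_rel_def)

lemma fin_gen_half_graph: "fin_gen (carr (half_graph n)) (edist (half_graph n))"
  unfolding half_graph_def by (simp add: fin_gen_discrete)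

lemma embedded_half_graph:
  assumes "embedding f (half_graph n) M"
  shows "rel_half_graph M n"
  unfolding rel_half_graph_def
proof (intro exI conjI)
  let ?a = "\<lambda>i. f (real (min i n))" and ?b = "\<lambda>j. f (- real (min j n) - 1)"
  have left: "real (min i n) \<in> carr (half_graph n)"
    and right: "- real (min j n) - 1 \<in> carr (half_graph n)" for i j
    unfolding half_graph_def by auto
  show "range ?a \<subseteq> carr M" "range ?b \<subseteq> carr M"
    using assms left right unfolding embedding_def by auto
  have rel_f: "rel M (f x) (f y) = half_graph_rel x y"
    if "x \<in> carr (half_graph n)" "y \<in> carr (half_graph n)" for x y
    using assms that unfolding embedding_def by (simp add: half_graph_def)
  show "\<forall>i<n. \<forall>j<n. rel M (?a i) (?b j) = (if j \<le> i then 1 else 0)"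
  proof (intro allI impI)
    fix i j assume "i < n" "j < n"
    have "rel M (?a i) (?b j) = half_graph_rel (real (min i n)) (- real (min j n) - 1)"
      by (rule rel_f[OF left right])
    then show "rel M (?a i) (?b j) = (if j \<le> i then 1 else 0)"
      using \<open>i < n\<close> \<open>j < n\<close> by (simp add: half_graph_rel_def)
  qed
qed

theorem proposition2p32:
  assumes "\<exists>A :: 'a rstruct. tec A"
  shows "unstable TYPE('a) (rfr_star TYPE('a))"
proof (rule unstable_if_rel_half_graphs)
  fix n
  obtain A :: "'a rstruct" where A: "tec A"
    using assms by blast
  then obtain f where f: "embedding f (half_graph n) A"
    using tec_embeds_fin_gen_model rfr_model_half_graph fin_gen_half_graph by blast
  then show "\<exists>M :: 'a rstruct. model_of (rfr_star TYPE('a)) M \<and> rel_half_graph M n"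
    using tec_model_of_rfr_star[OF A] embedded_half_graph[OF f] by blast
qed

end
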